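(* Let $d\ge2$, suppose $\mathcal D\subseteq\mathbb S_1^{d-1}$ has non-empty interior and $\mathcal C\subset\Gamma\backslash G\times(0,1)$ is compact. Then: (i) there exists $\kappa(\mathcal C)>0$ such that $F_{\mathcal D}(M,t)<\kappa(\mathcal C)$ whenever $(\Gamma M,t)\in\mathcal C$; and (ii) $F_{\mathcal D}$ is continuous at every point $(\Gamma M,t)\in\mathcal C$ satisfying $$(\mathbb Z^{d+1}M\setminus\{0\})\cap\partial\big((-t,1-t)\times(0,\kappa(\mathcal C)]\mathcal D\big)=\emptyset.$$
   Context: $G=\mathrm{SL}(d+1,\mathbb R)$, $\Gamma=\mathrm{SL}(d+1,\mathbb Z)$, $\Gamma\backslash G$ with the quotient topology. Row vectors in $\mathbb R^{d+1}$ are written $(u,\vec v)$, $u\in\mathbb R$, $\vec v\in\mathbb R^d$; $\mathbb Z^{d+1}M=\{\vec mM:\vec m\in\mathbb Z^{d+1}\}$. For $t\in(0,1)$, $\mathcal Q_{\mathcal D}(M,t)=\{(u,\vec v)\in\mathbb Z^{d+1}M:-t<u<1-t,\ \vec v\in\mathbb R_{>0}\mathcal D\}$ and $F_{\mathcal D}(M,t)=\min\{|\vec v|:(u,\vec v)\in\mathcal Q_{\mathcal D}(M,t)\}$; this is a well-defined positive function on $\Gamma\backslash G\times(0,1)$. For $r>0$, $(0,r]\mathcal D=\{s\vec x: 0<s\le r,\ \vec x\in\mathcal D\}$; $\partial$ denotes topological boundary in $\mathbb R^{d+1}$. *)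

theory Defs
  imports "HOL-Analysis.Analysis"
begin

text \<open>The dimension d is CARD('d) for a finite type 'd. Vectors of
R^(d+1) are indexed by 'd option: the coordinate None is u, and the coordinates
Some i form the vector v in R^d = real^'d. Matrices act on row vectors: w v* M.\<close>

type_synonym 'd vecd1 = "real ^ ('d option)"
type_synonym 'd matd1 = "real ^ ('d option) ^ ('d option)"

definition ucomp :: "'d::finite vecd1 \<Rightarrow> real" where
  "ucomp w = w $ None"

definition vcomp :: "'d::finite vecd1 \<Rightarrow> real ^ 'd" where
  "vcomp w = (\<chi> i. w $ Some i)"

definition SLR :: "'d::finite matd1 set" where
  "SLR = {M. det M = 1}"

definition SLZ :: "'d::finite matd1 set" where
  "SLZ = {M. det M = 1 \<and> (\<forall>i j. M $ i $ j \<in> \<int>)}"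

definition coset :: "'d::finite matd1 \<Rightarrow> 'd matd1 set" where
  "coset M = (\<lambda>\<gamma>. \<gamma> ** M) ` SLZ"

definition quot_top :: "'a topology \<Rightarrow> ('a \<Rightarrow> 'b) \<Rightarrow> 'b topology" where
  "quot_top X f = topology (\<lambda>U. U \<subseteq> f ` topspace X \<and> openin X {x \<in> topspace X. f x \<in> U})"

lemma istopology_quot_top:
  "istopology (\<lambda>U. U \<subseteq> f ` topspace X \<and> openin X {x \<in> topspace X. f x \<in> U})"
proof -
  have i: "{x \<in> topspace X. f x \<in> S \<inter> T} = {x \<in> topspace X. f x \<in> S} \<inter> {x \<in> topspace X. f x \<in> T}"
    for S T by auto
  have u: "{x \<in> topspace X. f x \<in> \<Union>K} = (\<Union>S\<in>K. {x \<in> topspace X. f x \<in> S})" for K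
    by auto
  show ?thesis unfolding istopology_def i u
    by (auto intro!: openin_Union)
qed

lemma openin_quot_top:
  "openin (quot_top X f) U \<longleftrightarrow> U \<subseteq> f ` topspace X \<and> openin X {x \<in> topspace X. f x \<in> U}"
  unfolding quot_top_def by (simp add: topology_inverse'[OF istopology_quot_top])

definition GammaG_top :: "'d::finite matd1 set topology" where
  "GammaG_top = quot_top (top_of_set SLR) coset"

definition lattice :: "'d::finite matd1 \<Rightarrow> 'd vecd1 set" where
  "lattice M = {m v* M | m. \<forall>i. m $ i \<in> \<int>}"

definition cone :: "(real ^ 'd) set \<Rightarrow> (real ^ 'd) set" where
  "cone D = {s *\<^sub>R x | s x. 0 < s \<and> x \<in> D}"

definition trunc_cone :: "real \<Rightarrow> (real ^ 'd) set \<Rightarrow> (real ^ 'd) set" where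
  "trunc_cone r D = {s *\<^sub>R x | s x. 0 < s \<and> s \<le> r \<and> x \<in> D}"

definition QD :: "(real ^ 'd) set \<Rightarrow> 'd::finite matd1 \<Rightarrow> real \<Rightarrow> 'd vecd1 set" where
  "QD D M t = {w \<in> lattice M. - t < ucomp w \<and> ucomp w < 1 - t \<and> vcomp w \<in> cone D}"

text \<open>F_D(M,t): the minimum (here written as infimum) of |v| over Q_D(M,t).\<close>
definition FD :: "(real ^ 'd) set \<Rightarrow> 'd::finite matd1 \<Rightarrow> real \<Rightarrow> real" where
  "FD D M t = Inf {norm (vcomp w) | w. w \<in> QD D M t}"

definition FDq :: "(real ^ 'd) set \<Rightarrow> 'd::finite matd1 set \<times> real \<Rightarrow> real" where
  "FDq D p = FD D (SOME M. M \<in> SLR \<and> coset M = fst p) (snd p)"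

definition region :: "(real ^ 'd) set \<Rightarrow> real \<Rightarrow> real \<Rightarrow> 'd::finite vecd1 set" where
  "region D t r = {w. - t < ucomp w \<and> ucomp w < 1 - t \<and> vcomp w \<in> trunc_cone r D}"

end

theory Submission
  imports Defs
begin

text \<open>Every lattice \<open>\<int>\<^sup>d\<^sup>+\<^sup>1M\<close> comes arbitrarily close to some positive integer multiple of any given vector
  (pigeonhole in a compact fundamental domain), so it meets the open set
  \<open>(-t,1-t) \<times> W\<close> for an open subcone \<open>W\<close> of \<open>\<real>\<^sub>>\<^sub>0D\<close>; the same integer vector does so for all nearby
  \<open>(M,t)\<close>. Hence \<open>F\<^sub>D\<close> is locally bounded, and bounded on compact sets, which gives \<open>\<kappa>\<close>.

  For continuity, \<open>F\<^sub>D(M,t)\<close> is realised by lattice vectors in the region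
  \<open>(-t,1-t) \<times> (0,\<kappa>]D\<close>. If no non-zero lattice vector lies on its boundary, every lattice vector is
  in its interior or off its closure, and this persists under small perturbations of \<open>(M,t)\<close>;
  near \<open>M\<close> only finitely many integer coordinate vectors can produce lattice vectors in the bounded
  region. This yields upper and lower semicontinuity.\<close>

section \<open>Coordinates, norms and continuity\<close>

lemma continuous_on_vector_matrix_mult [continuous_intros]:
  fixes f :: "'a::topological_space \<Rightarrow> real^'m::finite" and g :: "'a \<Rightarrow> real^'n::finite^'m"
  shows "continuous_on S f \<Longrightarrow> continuous_on S g \<Longrightarrow> continuous_on S (\<lambda>x. f x v* g x)"
  by (unfold vector_matrix_mult_def) (intro continuous_intros)

lemma continuous_on_matrix_matrix_mult [continuous_intros]:
  fixes f :: "'a::topological_space \<Rightarrow> real^'n::finite^'m::finite" and g :: "'a \<Rightarrow> real^'k::finite^'n"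
  shows "continuous_on S f \<Longrightarrow> continuous_on S g \<Longrightarrow> continuous_on S (\<lambda>x. f x ** g x)"
  by (unfold matrix_matrix_mult_def) (intro continuous_intros)

lemma continuous_on_ucomp [continuous_intros]:
  "continuous_on S f \<Longrightarrow> continuous_on S (\<lambda>x. ucomp (f x))"
  unfolding ucomp_def by (intro continuous_intros)

lemma continuous_on_vcomp [continuous_intros]:
  "continuous_on S f \<Longrightarrow> continuous_on S (\<lambda>x. vcomp (f x))"
  unfolding vcomp_def by (intro continuous_intros)

lemma eventually_nhds_continuous_in_open:
  assumes "continuous_on UNIV f" "open S" "f a \<in> S"
  shows "\<forall>\<^sub>F x in nhds a. f x \<in> S"
  unfolding eventually_nhds using assms by (intro exI[of _ "f -` S"]) (auto intro: open_vimage)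

lemma compactin_locally_bounded_above:
  fixes f :: "'a \<Rightarrow> real"
  assumes "compactin X C"
    and "\<And>x. x \<in> C \<Longrightarrow> \<exists>U K. openin X U \<and> x \<in> U \<and> (\<forall>y\<in>U. f y < K)"
  shows "\<exists>K. \<forall>x\<in>C. f x < K"
proof -
  define \<U> where "\<U> = {U. openin X U \<and> (\<exists>K. \<forall>y\<in>U. f y < K)}"
  have "C \<subseteq> \<Union>\<U>"
    using assms(2) unfolding \<U>_def by blast
  moreover have "\<forall>U\<in>\<U>. openin X U"
    unfolding \<U>_def by blast
  ultimately obtain \<F> where \<F>: "finite \<F>" "\<F> \<subseteq> \<U>" "C \<subseteq> \<Union>\<F>"
    using assms(1) unfolding compactin_def by blast
  then have "\<forall>U\<in>\<F>. \<exists>K. \<forall>y\<in>U. f y < K"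
    unfolding \<U>_def by blast
  then obtain K where K: "\<forall>U\<in>\<F>. \<forall>y\<in>U. f y < K U"
    by (rule bchoice[THEN exE])
  have "\<forall>x\<in>C. f x < Max (insert 0 (K ` \<F>))"
  proof
    fix x assume "x \<in> C"
    then obtain U where "U \<in> \<F>" "x \<in> U"
      using \<F>(3) by blast
    then have "f x < K U" "K U \<le> Max (insert 0 (K ` \<F>))"
      using K \<F>(1) by auto
    then show "f x < Max (insert 0 (K ` \<F>))"
      by linarith
  qed
  then show ?thesis
    by blast
qed

lemma ucomp_add [simp]: "ucomp (a + b) = ucomp a + ucomp b"
  and ucomp_scaleR [simp]: "ucomp (c *\<^sub>R a) = c * ucomp a"
  and ucomp_axis [simp]: "ucomp (axis None 1) = 1"
  by (simp_all add: ucomp_def)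

lemma vcomp_add [simp]: "vcomp (a + b) = vcomp a + vcomp b"
  and vcomp_scaleR [simp]: "vcomp (c *\<^sub>R a) = c *\<^sub>R vcomp a"
  and vcomp_zero [simp]: "vcomp 0 = 0"
  and vcomp_axis [simp]: "vcomp (axis None 1) = 0"
  by (simp_all add: vcomp_def vec_eq_iff axis_def)

lemma abs_ucomp_le_norm: "\<bar>ucomp w\<bar> \<le> norm w"
  unfolding ucomp_def by (rule component_le_norm_cart)

lemma norm_power2_ucomp_vcomp:
  "(norm (w :: 'd::finite vecd1))\<^sup>2 = (ucomp w)\<^sup>2 + (norm (vcomp w))\<^sup>2"
proof -
  have split: "(UNIV :: 'd option set) = insert None (range Some)"
    by (auto intro: option.exhaust)
  have "(norm w)\<^sup>2 = (\<Sum>i\<in>insert None (range Some). (w $ i)\<^sup>2)"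
    by (simp add: norm_vec_def L2_set_def sum_nonneg flip: split)
  also have "\<dots> = (w $ None)\<^sup>2 + (\<Sum>j\<in>UNIV. (w $ Some j)\<^sup>2)"
    by (simp add: sum.reindex)
  also have "\<dots> = (ucomp w)\<^sup>2 + (norm (vcomp w))\<^sup>2"
    by (simp add: norm_vec_def L2_set_def sum_nonneg ucomp_def vcomp_def)
  finally show ?thesis .
qed

lemma norm_vcomp_le: "norm (vcomp w) \<le> norm w"
  by (rule power2_le_imp_le) (simp_all add: norm_power2_ucomp_vcomp)

lemma norm_le_ucomp_vcomp: "norm w \<le> \<bar>ucomp w\<bar> + norm (vcomp w)"
  by (rule power2_le_imp_le) (simp_all add: norm_power2_ucomp_vcomp power2_sum)

lemma norm_vector_matrix_mult_le:
  fixes x :: "real^'n::finite" and A :: "real^'m::finite^'n"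
  shows "norm (x v* A) \<le> real CARD('m) * real CARD('n) * norm A * norm x"
proof -
  have "\<bar>transpose A $ i $ j\<bar> \<le> norm A" for i j
    unfolding transpose_def
    using component_le_norm_cart[of "A $ j" i] Finite_Cartesian_Product.norm_nth_le[of A j] by simp
  then have bound: "onorm ((*v) (transpose A)) \<le> real CARD('m) * real CARD('n) * norm A"
    by (rule onorm_le_matrix_component)
  have "norm (x v* A) \<le> onorm ((*v) (transpose A)) * norm x"
    using onorm[OF matrix_vector_mul_bounded_linear, of "transpose A" x] by simp
  also have "\<dots> \<le> real CARD('m) * real CARD('n) * norm A * norm x"
    by (rule mult_right_mono[OF bound norm_ge_zero])
  finally show ?thesis .
qed

lemma eventually_norm_le_vector_matrix_mult_nhds:
  fixes M0 :: "real^'n::finite^'n"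
  assumes "0 < C" "\<And>x. norm x \<le> C * norm (x v* M0)"
  shows "\<forall>\<^sub>F M in nhds M0. \<forall>x. norm x \<le> 2 * C * norm (x v* M)"
proof -
  define c where "c = real CARD('n) * real CARD('n)"
  have near_M0: "norm x \<le> 2 * C * norm (x v* M)" if "c * norm (M - M0) \<le> 1 / (2 * C)" for M x
  proof -
    have "norm (x v* (M - M0)) \<le> c * norm (M - M0) * norm x"
      using norm_vector_matrix_mult_le[of x "M - M0"] by (simp add: c_def)
    also have "\<dots> \<le> norm x / (2 * C)"
      using mult_right_mono[OF that norm_ge_zero] by simp
    finally have "norm (x v* (M - M0)) \<le> norm x / (2 * C)" .
    moreover have "norm (x v* M0) \<le> norm (x v* M) + norm (x v* (M - M0))"
      using norm_triangle_ineq4[of "x v* M" "x v* (M - M0)"]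
      by (simp add: vector_matrix_mult_diff_rdistrib)
    ultimately have "C * norm (x v* M0) \<le> C * (norm (x v* M) + norm x / (2 * C))"
      using \<open>0 < C\<close> by (intro mult_left_mono) auto
    also have "\<dots> = C * norm (x v* M) + norm x / 2"
      using \<open>0 < C\<close> by (simp add: field_simps)
    finally show ?thesis
      using assms(2)[of x] by linarith
  qed
  have "\<forall>\<^sub>F M in nhds M0. c * norm (M - M0) \<in> {..<1 / (2 * C)}"
    using \<open>0 < C\<close> by (intro eventually_nhds_continuous_in_open continuous_intros) auto
  then show ?thesis
    by eventually_elim (use near_M0 in auto)
qed

lemma eventually_norm_le_vector_matrix_mult:
  fixes M0 :: "real^'n::finite^'n"
  assumes "invertible M0"
  obtains C where "0 < C" "\<forall>\<^sub>F M in nhds M0. \<forall>x. norm x \<le> C * norm (x v* M)"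
proof -
  obtain B where B: "M0 ** B = mat 1"
    using assms invertible_def by blast
  define C where "C = real CARD('n) * real CARD('n) * norm B + 1"
  have "norm x \<le> C * norm (x v* M0)" for x :: "real^'n"
  proof -
    have "norm x = norm ((x v* M0) v* B)"
      by (simp add: vector_matrix_mul_assoc B)
    also have "\<dots> \<le> (C - 1) * norm (x v* M0)"
      using norm_vector_matrix_mult_le[of "x v* M0" B] by (simp add: C_def mult.commute)
    also have "\<dots> \<le> C * norm (x v* M0)"
      by (simp add: mult_right_mono)
    finally show ?thesis .
  qed
  moreover have "0 < C"
    by (simp add: C_def add_nonneg_pos)
  ultimately have "\<forall>\<^sub>F M in nhds M0. \<forall>x. norm x \<le> 2 * C * norm (x v* M)"
    by (intro eventually_norm_le_vector_matrix_mult_nhds)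
  then show ?thesis
    using \<open>0 < C\<close> by (intro that[of "2 * C"]) auto
qed

lemma finite_integer_vectors_norm_le:
  "finite {m :: real^'n::finite. (\<forall>i. m $ i \<in> \<int>) \<and> norm m \<le> R}"
proof (rule finite_subset)
  show "{m :: real^'n. (\<forall>i. m $ i \<in> \<int>) \<and> norm m \<le> R}
          \<subseteq> vec_lambda ` (UNIV \<rightarrow>\<^sub>E {k \<in> \<int>. \<bar>k\<bar> \<le> R})"
  proof
    fix m :: "real^'n" assume "m \<in> {m. (\<forall>i. m $ i \<in> \<int>) \<and> norm m \<le> R}"
    then have "vec_nth m \<in> UNIV \<rightarrow>\<^sub>E {k \<in> \<int>. \<bar>k\<bar> \<le> R}"
      by (auto simp: PiE_UNIV_domain intro: order_trans[OF component_le_norm_cart])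
    then show "m \<in> vec_lambda ` (UNIV \<rightarrow>\<^sub>E {k \<in> \<int>. \<bar>k\<bar> \<le> R})"
      by (rule rev_image_eqI) simp
  qed
  show "finite (vec_lambda ` (UNIV \<rightarrow>\<^sub>E {k :: real \<in> \<int>. \<bar>k\<bar> \<le> R}) :: (real^'n) set)"
    by (intro finite_imageI finite_PiE finite_abs_int_segment) simp
qed


section \<open>The quotient \<Gamma>\G\<close>

lemma SLR_invertible: "M \<in> SLR \<Longrightarrow> invertible M"
  unfolding SLR_def by (simp add: invertible_det_nz)

lemma SLZ_mat_1: "(mat 1 :: 'd::finite matd1) \<in> SLZ"
proof -
  have "\<forall>i j. (mat 1 :: 'd matd1) $ i $ j \<in> \<int>"
    by (simp add: mat_def)
  then show ?thesis
    unfolding SLZ_def by (simp add: det_I)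
qed

lemma SLZ_mult:
  assumes "\<gamma> \<in> SLZ" "\<gamma>' \<in> SLZ"
  shows "\<gamma> ** \<gamma>' \<in> SLZ"
proof -
  have "det (\<gamma> ** \<gamma>') = 1"
    using assms unfolding SLZ_def by (simp add: det_mul)
  moreover have "\<forall>i j. (\<gamma> ** \<gamma>') $ i $ j \<in> \<int>"
    using assms unfolding SLZ_def by (auto simp: matrix_matrix_mult_def intro!: Ints_sum Ints_mult)
  ultimately show ?thesis
    unfolding SLZ_def by simp
qed

lemma SLZ_mult_SLR: "\<gamma> \<in> SLZ \<Longrightarrow> M \<in> SLR \<Longrightarrow> \<gamma> ** M \<in> SLR"
  unfolding SLZ_def SLR_def by (simp add: det_mul)

lemma coset_self: "M \<in> coset M"
  unfolding coset_def using SLZ_mat_1 by (metis image_eqI matrix_mul_lid)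

lemma coset_mult_subset: "\<gamma> \<in> SLZ \<Longrightarrow> coset (\<gamma> ** M) \<subseteq> coset M"
  unfolding coset_def by (auto simp: matrix_mul_assoc intro!: image_eqI SLZ_mult)

lemma coset_eqD: "coset A = coset B \<Longrightarrow> \<exists>\<gamma>\<in>SLZ. A = \<gamma> ** B"
  using coset_self[of A] unfolding coset_def by auto

lemma coset_eq_mult:
  assumes "\<gamma> \<in> SLZ" "\<gamma>' \<in> SLZ" "\<gamma> ** \<gamma>' = mat 1"
  shows "coset (\<gamma>' ** M) = coset M"
proof
  show "coset (\<gamma>' ** M) \<subseteq> coset M"
    using assms(2) by (rule coset_mult_subset)
  have "M = \<gamma> ** (\<gamma>' ** M)"
    by (simp add: matrix_mul_assoc assms(3))
  then show "coset M \<subseteq> coset (\<gamma>' ** M)"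
    using coset_mult_subset[OF assms(1)] by metis
qed

text \<open>The two elements of \<open>SLZ\<close> relating two representatives of a coset are mutually inverse,
  because the representatives are invertible; this avoids showing that \<open>SLZ\<close> is closed under
  inverses.\<close>
lemma coset_eq_obtain_inverse_pair:
  assumes "coset M = coset M'" "invertible M"
  obtains \<gamma> \<gamma>' where "\<gamma> \<in> SLZ" "\<gamma>' \<in> SLZ" "M' = \<gamma>' ** M" "\<gamma> ** \<gamma>' = mat 1"
proof -
  obtain \<gamma> \<gamma>' where \<gamma>: "\<gamma> \<in> SLZ" "M = \<gamma> ** M'" and \<gamma>': "\<gamma>' \<in> SLZ" "M' = \<gamma>' ** M"
    using coset_eqD[OF assms(1)] coset_eqD[OF assms(1)[symmetric]] by blast
  obtain B where B: "M ** B = mat 1"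
    using assms(2) invertible_def by blast
  have "(\<gamma> ** \<gamma>') ** M = M"
    using \<gamma> \<gamma>' by (simp add: matrix_mul_assoc)
  then have "(\<gamma> ** \<gamma>') ** M ** B = M ** B"
    by simp
  then have "\<gamma> ** \<gamma>' = mat 1"
    by (simp add: B flip: matrix_mul_assoc)
  then show ?thesis
    using that \<gamma> \<gamma>' by blast
qed

lemma lattice_mult_subset: "\<gamma> \<in> SLZ \<Longrightarrow> lattice (\<gamma> ** M) \<subseteq> lattice M"
proof
  fix w assume \<gamma>: "\<gamma> \<in> SLZ" and "w \<in> lattice (\<gamma> ** M)"
  then obtain m where m: "\<forall>i. m $ i \<in> \<int>" "w = m v* (\<gamma> ** M)"
    unfolding lattice_def by auto
  have "w = (m v* \<gamma>) v* M"
    using m by (simp add: vector_matrix_mul_assoc)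
  moreover have "\<forall>i. (m v* \<gamma>) $ i \<in> \<int>"
    using m \<gamma> unfolding SLZ_def by (auto simp: vector_matrix_mult_def intro!: Ints_sum Ints_mult)
  ultimately show "w \<in> lattice M"
    unfolding lattice_def by blast
qed

lemma lattice_coset_eq: "coset A = coset B \<Longrightarrow> lattice A = lattice B"
  by (metis coset_eqD lattice_mult_subset subset_antisym)

lemma FDq_coset: "M \<in> SLR \<Longrightarrow> FDq D (coset M, t) = FD D M t"
proof -
  assume "M \<in> SLR"
  then have "coset (SOME M'. M' \<in> SLR \<and> coset M' = coset M) = coset M"
    using someI[of "\<lambda>M'. M' \<in> SLR \<and> coset M' = coset M" M] by blast
  then have "lattice (SOME M'. M' \<in> SLR \<and> coset M' = coset M) = lattice M"
    by (rule lattice_coset_eq)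
  then show ?thesis
    unfolding FDq_def FD_def QD_def by simp
qed

lemma topspace_GammaG_top: "topspace GammaG_top = coset ` SLR"
proof -
  have SLR_saturated: "{M \<in> SLR. coset M \<in> coset ` SLR} = SLR"
    by auto
  have "openin GammaG_top (coset ` SLR)"
    unfolding GammaG_top_def openin_quot_top by (simp add: SLR_saturated)
  then have "coset ` SLR \<subseteq> topspace GammaG_top"
    by (rule openin_subset)
  moreover have "topspace GammaG_top \<subseteq> coset ` SLR"
    using openin_topspace[of GammaG_top] unfolding GammaG_top_def openin_quot_top by auto
  ultimately show ?thesis
    by blast
qed

lemma openin_GammaG_top_coset_image:
  assumes "open A"
  shows "openin GammaG_top (coset ` (SLR \<inter> A))"
  unfolding GammaG_top_def openin_quot_top
proof (intro conjI)
  show "coset ` (SLR \<inter> A) \<subseteq> coset ` topspace (top_of_set SLR)"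
    by auto
  let ?P = "{M \<in> topspace (top_of_set SLR). coset M \<in> coset ` (SLR \<inter> A)}"
  show "openin (top_of_set SLR) ?P"
  proof (subst openin_subopen, intro ballI)
    fix M assume "M \<in> ?P"
    then obtain M' where M: "M \<in> SLR" and M': "M' \<in> A" "coset M = coset M'"
      by auto
    obtain \<gamma> \<gamma>' where \<gamma>: "\<gamma> \<in> SLZ" "\<gamma>' \<in> SLZ" "M' = \<gamma>' ** M" "\<gamma> ** \<gamma>' = mat 1"
      using coset_eq_obtain_inverse_pair[OF M'(2) SLR_invertible[OF M]] by blast
    let ?T = "SLR \<inter> (\<lambda>N. \<gamma>' ** N) -` A"
    have "open ((\<lambda>N. \<gamma>' ** N) -` A)"
      using assms by (intro open_vimage continuous_intros)
    then have "openin (top_of_set SLR) ?T"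
      by auto
    moreover have "?T \<subseteq> ?P"
    proof
      fix N assume N: "N \<in> ?T"
      then have "\<gamma>' ** N \<in> SLR \<inter> A" "coset N = coset (\<gamma>' ** N)"
        using SLZ_mult_SLR[OF \<gamma>(2)] coset_eq_mult[OF \<gamma>(1,2,4)] by auto
      then have "coset N \<in> coset ` (SLR \<inter> A)"
        by (intro rev_image_eqI)
      then show "N \<in> ?P"
        using N by simp
    qed
    moreover have "M \<in> ?T"
      using M M' \<gamma> by auto
    ultimately show "\<exists>T. openin (top_of_set SLR) T \<and> M \<in> T \<and> T \<subseteq> ?P"
      by blast
  qed
qed

lemma GammaG_nbhd_from_nhds:
  assumes "\<forall>\<^sub>F (M', t') in nhds (M, t). P M' t'" "M \<in> SLR" "t \<in> {0<..<1}"
  obtains U where "openin (prod_topology GammaG_top (top_of_set {0<..<1})) U" "(coset M, t) \<in> U"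
    "\<And>q. q \<in> U \<Longrightarrow> \<exists>M' t'. q = (coset M', t') \<and> M' \<in> SLR \<and> t' \<in> {0<..<1} \<and> P M' t'"
proof -
  obtain S where S: "open S" "(M, t) \<in> S" "\<forall>(M', t')\<in>S. P M' t'"
    using assms(1) unfolding eventually_nhds by blast
  obtain A B where AB: "open A" "open B" "(M, t) \<in> A \<times> B" "A \<times> B \<subseteq> S"
    using open_prod_elim[OF S(1,2)] by blast
  let ?U = "coset ` (SLR \<inter> A) \<times> ({0<..<1} \<inter> B)"
  have "openin (prod_topology GammaG_top (top_of_set {0<..<1})) ?U"
    unfolding openin_prod_Times_iff using openin_GammaG_top_coset_image[OF AB(1)] AB(2) by auto
  moreover have "(coset M, t) \<in> ?U"
    using assms(2,3) AB(3) by auto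
  moreover have "\<exists>M' t'. q = (coset M', t') \<and> M' \<in> SLR \<and> t' \<in> {0<..<1} \<and> P M' t'"
    if "q \<in> ?U" for q
    using that AB(4) S(3) by fast
  ultimately show ?thesis
    by (rule that)
qed

lemma topcontinuous_at_FDq:
  assumes "M \<in> SLR" "t \<in> {0<..<1}"
    and "continuous (at (M, t) within SLR \<times> {0<..<1}) (\<lambda>(M, t). FD D M t)"
  shows "topcontinuous_at (prod_topology GammaG_top (top_of_set {0<..<1})) euclideanreal
           (FDq D) (coset M, t)"
  unfolding topcontinuous_at_def
proof (intro conjI allI impI)
  show "(coset M, t) \<in> topspace (prod_topology GammaG_top (top_of_set {0<..<1}))"
    using assms(1,2) by (simp add: topspace_GammaG_top)
  show "FDq D \<in> topspace (prod_topology GammaG_top (top_of_set {0<..<1})) \<rightarrow> topspace euclideanreal"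
    by simp
  fix V assume "openin euclideanreal V \<and> FDq D (coset M, t) \<in> V"
  then have V: "open V" "FD D M t \<in> V"
    using FDq_coset[OF assms(1)] by auto
  have "\<forall>\<^sub>F p in at (M, t) within SLR \<times> {0<..<1}. (\<lambda>(M, t). FD D M t) p \<in> V"
    using assms(3) V unfolding continuous_within by (auto intro: topological_tendstoD)
  then have "\<forall>\<^sub>F (M', t') in nhds (M, t). M' \<in> SLR \<longrightarrow> t' \<in> {0<..<1} \<longrightarrow> FD D M' t' \<in> V"
    unfolding eventually_at_filter by eventually_elim (use V in auto)
  then obtain U where U: "openin (prod_topology GammaG_top (top_of_set {0<..<1})) U" "(coset M, t) \<in> U"
    "\<And>q. q \<in> U \<Longrightarrow> \<exists>M' t'. q = (coset M', t') \<and> M' \<in> SLR \<and> t' \<in> {0<..<1} \<and>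
            (M' \<in> SLR \<longrightarrow> t' \<in> {0<..<1} \<longrightarrow> FD D M' t' \<in> V)"
    using GammaG_nbhd_from_nhds assms(1,2) by blast
  have "FDq D q \<in> V" if q: "q \<in> U" for q
  proof -
    obtain M' t' where "q = (coset M', t')" "M' \<in> SLR" "t' \<in> {0<..<1}" "FD D M' t' \<in> V"
      using U(3)[OF q] by blast
    then show ?thesis
      by (simp add: FDq_coset)
  qed
  then show "\<exists>U. openin (prod_topology GammaG_top (top_of_set {0<..<1})) U \<and> (coset M, t) \<in> U \<and>
               (\<forall>q\<in>U. FDq D q \<in> V)"
    using U(1,2) by blast
qed

section \<open>Lattice points in open cones\<close>

lemma lattice_vector_matrix_mult: "\<forall>i. m $ i \<in> \<int> \<Longrightarrow> m v* M \<in> lattice M"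
  unfolding lattice_def by blast

lemma FD_le_norm: "w \<in> QD D M t \<Longrightarrow> FD D M t \<le> norm (vcomp w)"
  unfolding FD_def by (rule cInf_lower) (auto intro: bdd_belowI[of _ 0])

text \<open>Pigeonhole: the errors \<open>\<lfloor>q\<^sub>n\<rfloor> M - n z\<close> with \<open>q\<^sub>n = n z M\<^sup>-\<^sup>1\<close> lie in a compact set,
  so two of them are \<open>\<epsilon>\<close>-close; their difference is the required approximation.\<close>
lemma lattice_approximates_multiple:
  fixes M :: "real^'n::finite^'n" and z :: "real^'n"
  assumes "invertible M" "\<epsilon> > 0"
  obtains m k where "\<forall>i. m $ i \<in> \<int>" "k \<ge> (1::nat)" "norm (m v* M - real k *\<^sub>R z) < \<epsilon>"
proof -
  obtain B where B: "B ** M = mat 1"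
    using assms(1) invertible_def by blast
  define q where "q n = (real n *\<^sub>R z) v* B" for n :: nat
  define mm where "mm n = (\<chi> i. (of_int \<lfloor>q n $ i\<rfloor> :: real))" for n
  define e where "e n = mm n v* M - real n *\<^sub>R z" for n
  define K where "K = (\<lambda>y. y v* M) ` cbox (- 1) 1"
  have "compact K"
    unfolding K_def by (intro compact_continuous_image compact_cbox continuous_intros)
  have "e n \<in> K" for n
  proof -
    have "q n v* M = real n *\<^sub>R z"
      unfolding q_def by (simp add: vector_matrix_mul_assoc B)
    then have "e n = (mm n - q n) v* M"
      unfolding e_def by (simp add: vector_matrix_mult_diff_distrib)
    moreover have "mm n - q n \<in> cbox (- 1) 1"
      unfolding mem_box_cart mm_def by (simp add: algebra_simps) linarith
    ultimately show ?thesis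
      unfolding K_def by blast
  qed
  then obtain l r where r: "strict_mono (r :: nat \<Rightarrow> nat)" "(e \<circ> r) \<longlonglongrightarrow> l"
    using compact_imp_seq_compact[OF \<open>compact K\<close>] seq_compactE by metis
  then obtain N where N: "\<forall>a\<ge>N. \<forall>b\<ge>N. norm ((e \<circ> r) a - (e \<circ> r) b) < \<epsilon>"
    using CauchyD[OF LIMSEQ_imp_Cauchy] assms(2) by blast
  have "r N < r (Suc N)"
    using r(1) by (simp add: strict_mono_def)
  define m where "m = mm (r (Suc N)) - mm (r N)"
  define k where "k = r (Suc N) - r N"
  have "m v* M - real k *\<^sub>R z = e (r (Suc N)) - e (r N)"
    using \<open>r N < r (Suc N)\<close> unfolding m_def k_def e_def
    by (simp add: vector_matrix_mult_diff_distrib algebra_simps of_nat_diff)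
  then have "norm (m v* M - real k *\<^sub>R z) < \<epsilon>"
    using N[rule_format, of "Suc N" N] by simp
  moreover have "\<forall>i. m $ i \<in> \<int>"
    unfolding m_def mm_def by simp
  moreover have "k \<ge> 1"
    using \<open>r N < r (Suc N)\<close> unfolding k_def by simp
  ultimately show ?thesis
    using that by blast
qed

lemma open_conic_subset_cone:
  fixes D :: "(real^'d::finite) set"
  assumes "top_of_set (sphere 0 1) interior_of D \<noteq> {}"
  obtains W where "open W" "W \<noteq> {}" "W \<subseteq> cone D" "\<And>y s. y \<in> W \<Longrightarrow> 0 < s \<Longrightarrow> s *\<^sub>R y \<in> W"
proof -
  obtain U x0 where U: "openin (top_of_set (sphere 0 1)) U" "x0 \<in> U" "U \<subseteq> D"
    using assms unfolding interior_of_def by blast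
  then obtain T where T: "open T" "U = sphere 0 1 \<inter> T"
    by (meson openin_open)
  define W where "W = {v. v \<noteq> 0 \<and> v /\<^sub>R norm v \<in> T}"
  have "W = - {0} \<inter> (\<lambda>v. v /\<^sub>R norm v) -` T"
    unfolding W_def by auto
  moreover have "continuous_on (- {0}) (\<lambda>v :: real^'d. v /\<^sub>R norm v)"
    by (intro continuous_intros) auto
  ultimately have "open W"
    using continuous_open_preimage T(1) by auto
  moreover have "x0 \<in> W"
    using U(2) T(2) unfolding W_def by auto
  moreover have "W \<subseteq> cone D"
  proof
    fix v assume v: "v \<in> W"
    then have "v = norm v *\<^sub>R (v /\<^sub>R norm v)" "norm v > 0" "v /\<^sub>R norm v \<in> D"
      using U(3) T(2) unfolding W_def by auto
    then show "v \<in> cone D"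
      unfolding cone_def by blast
  qed
  moreover have "s *\<^sub>R y \<in> W" if "y \<in> W" "0 < s" for y s
  proof -
    have "(s *\<^sub>R y) /\<^sub>R norm (s *\<^sub>R y) = y /\<^sub>R norm y"
      using \<open>0 < s\<close> by simp
    then show ?thesis
      using that unfolding W_def by (simp only: mem_Collect_eq) simp
  qed
  ultimately show ?thesis
    using that by blast
qed

text \<open>Approximate a large multiple \<open>k (0, x\<^sub>0)\<close> by a lattice point: its \<open>u\<close>-coordinate is small
  and its \<open>v\<close>-coordinate, divided by \<open>k\<close>, is close to \<open>x\<^sub>0\<close>.\<close>
lemma lattice_point_in_slab_cone:
  fixes W :: "(real^'d::finite) set"
  assumes W: "open W" "W \<noteq> {}" "\<And>y s. y \<in> W \<Longrightarrow> 0 < s \<Longrightarrow> s *\<^sub>R y \<in> W"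
    and "invertible (M :: 'd matd1)" "0 < t" "t < 1"
  obtains m where "\<forall>i. m $ i \<in> \<int>" "- t < ucomp (m v* M)" "ucomp (m v* M) < 1 - t"
    "vcomp (m v* M) \<in> W"
proof -
  obtain x0 \<delta> where \<delta>: "\<delta> > 0" "ball x0 \<delta> \<subseteq> W"
    using W(1,2) open_contains_ball by blast
  define z :: "'d vecd1" where "z = (\<chi> i. case i of None \<Rightarrow> 0 | Some j \<Rightarrow> x0 $ j)"
  have z: "ucomp z = 0" "vcomp z = x0"
    unfolding z_def ucomp_def vcomp_def by (auto simp: vec_eq_iff)
  obtain m k where mk: "\<forall>i. m $ i \<in> \<int>" "k \<ge> (1::nat)"
    "norm (m v* M - real k *\<^sub>R z) < min \<delta> (min t (1 - t))"
    using lattice_approximates_multiple[OF \<open>invertible M\<close>, of "min \<delta> (min t (1 - t))" z]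
      \<delta>(1) \<open>0 < t\<close> \<open>t < 1\<close> by auto
  define d where "d = m v* M - real k *\<^sub>R z"
  have w: "m v* M = d + real k *\<^sub>R z"
    unfolding d_def by simp
  have "\<bar>ucomp d\<bar> < min t (1 - t)"
    using abs_ucomp_le_norm[of d] mk(3) unfolding d_def by linarith
  then have "- t < ucomp (m v* M)" "ucomp (m v* M) < 1 - t"
    unfolding w using z by auto
  moreover have "vcomp (m v* M) \<in> W"
  proof -
    have "real k \<ge> 1"
      using mk(2) by simp
    then have "norm (vcomp d /\<^sub>R real k) = norm (vcomp d) / real k"
      by (simp add: divide_inverse_commute)
    also have "\<dots> \<le> norm (vcomp d)"
      using \<open>real k \<ge> 1\<close> by (simp add: divide_le_eq mult_le_cancel_left1)
    also have "\<dots> \<le> norm d"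
      by (rule norm_vcomp_le)
    also have "\<dots> < \<delta>"
      using mk(3) unfolding d_def by simp
    finally have "x0 + vcomp d /\<^sub>R real k \<in> W"
      using \<delta>(2) by (auto simp: dist_norm)
    then have "real k *\<^sub>R (x0 + vcomp d /\<^sub>R real k) \<in> W"
      using W(3) mk(2) by simp
    then show ?thesis
      unfolding w using mk(2) z by (simp add: algebra_simps)
  qed
  ultimately show ?thesis
    using that mk(1) by blast
qed

lemma lattice_point_in_slab_subcone:
  fixes D :: "(real^'d::finite) set"
  assumes "top_of_set (sphere 0 1) interior_of D \<noteq> {}" "invertible (M :: 'd matd1)" "0 < t" "t < 1"
  obtains W m where "open W" "W \<subseteq> cone D" "\<forall>i. m $ i \<in> \<int>"
    "- t < ucomp (m v* M)" "ucomp (m v* M) < 1 - t" "vcomp (m v* M) \<in> W"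
proof -
  obtain W where W: "open W" "W \<noteq> {}" "W \<subseteq> cone D" "\<And>y s. y \<in> W \<Longrightarrow> 0 < s \<Longrightarrow> s *\<^sub>R y \<in> W"
    using open_conic_subset_cone[OF assms(1)] by blast
  obtain m where "\<forall>i. m $ i \<in> \<int>" "- t < ucomp (m v* M)" "ucomp (m v* M) < 1 - t"
    "vcomp (m v* M) \<in> W"
    using lattice_point_in_slab_cone[OF W(1,2,4) assms(2-4)] by blast
  with W(1,3) show ?thesis
    by (rule that)
qed

lemma QD_nonempty:
  fixes D :: "(real^'d::finite) set"
  assumes "top_of_set (sphere 0 1) interior_of D \<noteq> {}" "invertible (M :: 'd matd1)" "0 < t" "t < 1"
  shows "QD D M t \<noteq> {}"
proof -
  obtain W m where W: "W \<subseteq> cone D" and m: "\<forall>i. m $ i \<in> \<int>"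
    "- t < ucomp (m v* M)" "ucomp (m v* M) < 1 - t" "vcomp (m v* M) \<in> W"
    by (rule lattice_point_in_slab_subcone[OF assms])
  then have "m v* M \<in> QD D M t"
    unfolding QD_def using lattice_vector_matrix_mult[OF m(1)] by auto
  then show ?thesis
    by blast
qed

lemma FD_locally_bounded:
  fixes D :: "(real^'d::finite) set"
  assumes "top_of_set (sphere 0 1) interior_of D \<noteq> {}" "invertible (M :: 'd matd1)" "0 < t" "t < 1"
  obtains K where "\<forall>\<^sub>F (M', t') in nhds (M, t). FD D M' t' < K"
proof -
  obtain W m where W: "open W" "W \<subseteq> cone D" and m: "\<forall>i. m $ i \<in> \<int>"
    "- t < ucomp (m v* M)" "ucomp (m v* M) < 1 - t" "vcomp (m v* M) \<in> W"
    by (rule lattice_point_in_slab_subcone[OF assms])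
  define K where "K = norm (vcomp (m v* M)) + 1"
  define f where "f p = (snd p + ucomp (m v* fst p), vcomp (m v* fst p))" for p :: "'d matd1 \<times> real"
  have "\<forall>\<^sub>F p in nhds (M, t). f p \<in> {0<..<1} \<times> (W \<inter> ball 0 K)"
    using m W(1) unfolding f_def K_def
    by (intro eventually_nhds_continuous_in_open continuous_intros open_Times open_Int) auto
  then have "\<forall>\<^sub>F (M', t') in nhds (M, t). FD D M' t' < K"
  proof eventually_elim
    case (elim p)
    then have "m v* fst p \<in> QD D (fst p) (snd p)" "norm (vcomp (m v* fst p)) < K"
      using W(2) lattice_vector_matrix_mult[OF m(1)] unfolding f_def QD_def by auto
    then show ?case
      using FD_le_norm by (fastforce split: prod.split)
  qed
  then show ?thesis
    by (rule that)
qed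


section \<open>Continuity of \<open>F\<^sub>D\<close>\<close>

lemma QD_imp_region:
  assumes "D \<subseteq> sphere 0 1" "w \<in> QD D M t" "norm (vcomp w) \<le> r"
  shows "w \<in> region D t r"
proof -
  obtain s x where sx: "vcomp w = s *\<^sub>R x" "s > 0" "x \<in> D"
    using assms(2) unfolding QD_def cone_def by auto
  then have "norm (vcomp w) = s"
    using assms(1) by auto
  then have "vcomp w \<in> trunc_cone r D"
    unfolding trunc_cone_def using sx assms(3) by auto
  then show ?thesis
    using assms(2) unfolding QD_def region_def by auto
qed

lemma region_imp_QD: "w \<in> lattice M \<Longrightarrow> w \<in> region D t r \<Longrightarrow> w \<in> QD D M t"
  unfolding region_def QD_def trunc_cone_def cone_def by auto

lemma zero_notin_region: "D \<subseteq> sphere 0 1 \<Longrightarrow> 0 \<notin> region D t r"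
  unfolding region_def trunc_cone_def by auto

lemma region_shift: "w \<in> region D t r \<longleftrightarrow> w + (t - t0) *\<^sub>R axis None 1 \<in> region D t0 r"
  unfolding region_def by auto

lemma eventually_in_region:
  assumes "m v* M0 \<in> interior (region D t0 r)"
  shows "\<forall>\<^sub>F (M, t) in nhds (M0, t0). m v* M \<in> region D t r"
proof -
  have "\<forall>\<^sub>F p in nhds (M0, t0). m v* fst p + (snd p - t0) *\<^sub>R axis None 1 \<in> interior (region D t0 r)"
    using assms by (intro eventually_nhds_continuous_in_open continuous_intros) auto
  then show ?thesis
    by eventually_elim (use interior_subset region_shift in fastforce)
qed

lemma eventually_notin_region:
  assumes "m v* M0 \<notin> closure (region D t0 r)"
  shows "\<forall>\<^sub>F (M, t) in nhds (M0, t0). m v* M \<notin> region D t r"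
proof -
  have "\<forall>\<^sub>F p in nhds (M0, t0). m v* fst p + (snd p - t0) *\<^sub>R axis None 1 \<in> - closure (region D t0 r)"
    using assms by (intro eventually_nhds_continuous_in_open continuous_intros) auto
  then show ?thesis
    by eventually_elim (use closure_subset region_shift in fastforce)
qed

lemma lattice_region_imp_interior:
  assumes "D \<subseteq> sphere 0 1" "(lattice M - {0}) \<inter> frontier (region D t r) = {}"
    and "w \<in> lattice M" "w \<in> region D t r"
  shows "w \<in> interior (region D t r)"
  using assms zero_notin_region[OF assms(1)] closure_subset unfolding frontier_def by blast

lemma lattice_notin_region_imp_notin_closure:
  assumes "(lattice M - {0}) \<inter> frontier (region D t r) = {}"
    and "w \<in> lattice M" "w \<noteq> 0" "w \<notin> region D t r"
  shows "w \<notin> closure (region D t r)"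
  using assms interior_subset unfolding frontier_def by blast

lemma eventually_FD_less:
  assumes D: "D \<subseteq> sphere 0 1"
    and frontier: "(lattice M0 - {0}) \<inter> frontier (region D t0 r) = {}"
    and "QD D M0 t0 \<noteq> {}" "FD D M0 t0 < c" "c \<le> r"
  shows "\<forall>\<^sub>F (M, t) in nhds (M0, t0). FD D M t < c"
proof -
  obtain w where w: "w \<in> QD D M0 t0" "norm (vcomp w) < c"
    using cInf_lessD[of "{norm (vcomp w) | w. w \<in> QD D M0 t0}" c] assms(3,4)
    unfolding FD_def by blast
  then obtain m where m: "\<forall>i. m $ i \<in> \<int>" "w = m v* M0"
    unfolding QD_def lattice_def by blast
  have "w \<in> region D t0 r"
    using QD_imp_region[OF D w(1)] w(2) \<open>c \<le> r\<close> by simp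
  then have "m v* M0 \<in> interior (region D t0 r)"
    using lattice_region_imp_interior[OF D frontier] lattice_vector_matrix_mult[OF m(1)] m(2)
    by blast
  then have "\<forall>\<^sub>F (M, t) in nhds (M0, t0). m v* M \<in> region D t r"
    by (rule eventually_in_region)
  moreover have "\<forall>\<^sub>F p in nhds (M0, t0). norm (vcomp (m v* fst p)) \<in> {..<c}"
    using w m(2) by (intro eventually_nhds_continuous_in_open continuous_intros) auto
  ultimately show ?thesis
  proof eventually_elim
    case (elim p)
    then show ?case
      using region_imp_QD[OF lattice_vector_matrix_mult[OF m(1)]] FD_le_norm
      by (fastforce split: prod.splits)
  qed
qed

text \<open>Either \<open>m M\<^sub>0\<close> is a vector of \<open>Q\<^sub>D\<close> already longer than \<open>c\<close>, or, by the frontier condition,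
  it lies off the closure of the region; both persist near \<open>(M\<^sub>0, t\<^sub>0)\<close>.\<close>
lemma eventually_region_imp_norm_ge:
  fixes M0 :: "'d::finite matd1"
  assumes D: "D \<subseteq> sphere 0 1"
    and frontier: "(lattice M0 - {0}) \<inter> frontier (region D t0 r) = {}"
    and "invertible M0" "c < FD D M0 t0" "\<forall>i. m $ i \<in> \<int>"
  shows "\<forall>\<^sub>F (M, t) in nhds (M0, t0). m v* M \<in> region D t r \<longrightarrow> c \<le> norm (vcomp (m v* M))"
proof (cases "m v* M0 \<in> QD D M0 t0")
  case True
  then have "c < norm (vcomp (m v* M0))"
    using FD_le_norm \<open>c < FD D M0 t0\<close> by fastforce
  then have "\<forall>\<^sub>F p in nhds (M0, t0). norm (vcomp (m v* fst p)) \<in> {c<..}"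
    by (intro eventually_nhds_continuous_in_open continuous_intros) auto
  then show ?thesis
    by eventually_elim auto
next
  case notin_QD: False
  show ?thesis
  proof (cases "m = 0")
    case True
    then show ?thesis
      using zero_notin_region[OF D] by (auto intro: always_eventually)
  next
    case False
    obtain B where "M0 ** B = mat 1"
      using \<open>invertible M0\<close> invertible_def by blast
    then have "m = (m v* M0) v* B"
      by (simp add: vector_matrix_mul_assoc)
    then have "m v* M0 \<noteq> 0"
      using False by auto
    moreover have lattice: "m v* M0 \<in> lattice M0"
      using assms(5) by (rule lattice_vector_matrix_mult)
    ultimately have "m v* M0 \<notin> closure (region D t0 r)"
      using lattice_notin_region_imp_notin_closure[OF frontier] region_imp_QD[OF lattice] notin_QD
      by blast
    then have "\<forall>\<^sub>F (M, t) in nhds (M0, t0). m v* M \<notin> region D t r"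
      by (rule eventually_notin_region)
    then show ?thesis
      by eventually_elim auto
  qed
qed

text \<open>Near \<open>M\<^sub>0\<close> a lattice point \<open>m M\<close> in the bounded region has a bounded coordinate vector \<open>m\<close>,
  so only finitely many \<open>m\<close> have to be controlled.\<close>
lemma eventually_QD_norm_ge:
  fixes M0 :: "'d::finite matd1"
  assumes D: "D \<subseteq> sphere 0 1"
    and frontier: "(lattice M0 - {0}) \<inter> frontier (region D t0 r) = {}"
    and "invertible M0" "c < FD D M0 t0" "c \<le> r"
  shows "\<forall>\<^sub>F (M, t) in nhds (M0, t0). t \<in> {0<..<1} \<longrightarrow> (\<forall>w\<in>QD D M t. c \<le> norm (vcomp w))"
proof -
  obtain C where "0 < C" and C: "\<forall>\<^sub>F M in nhds M0. \<forall>x. norm x \<le> C * norm (x v* M)"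
    using eventually_norm_le_vector_matrix_mult[OF \<open>invertible M0\<close>] by blast
  then have C': "\<forall>\<^sub>F (M, t) in nhds (M0, t0). \<forall>x. norm x \<le> C * norm (x v* M)"
    unfolding nhds_prod by (simp add: eventually_prod1 case_prod_beta)
  define S where "S = {m :: 'd vecd1. (\<forall>i. m $ i \<in> \<int>) \<and> norm m \<le> C * (1 + r)}"
  have "\<forall>\<^sub>F (M, t) in nhds (M0, t0). m v* M \<in> region D t r \<longrightarrow> c \<le> norm (vcomp (m v* M))"
    if "m \<in> S" for m
    using that unfolding S_def by (intro eventually_region_imp_norm_ge[OF D frontier assms(3,4)]) simp
  then have "\<forall>\<^sub>F p in nhds (M0, t0). \<forall>m\<in>S.
      case p of (M, t) \<Rightarrow> m v* M \<in> region D t r \<longrightarrow> c \<le> norm (vcomp (m v* M))"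
    using finite_integer_vectors_norm_le unfolding S_def by (intro eventually_ball_finite) auto
  with C' show ?thesis
  proof eventually_elim
    case (elim p)
    obtain M t where p: "p = (M, t)"
      by fastforce
    show ?case
    proof (clarsimp simp: p)
      fix w assume t: "0 < t" "t < 1" and w: "w \<in> QD D M t"
      show "c \<le> norm (vcomp w)"
      proof (rule ccontr)
        assume "\<not> c \<le> norm (vcomp w)"
        then have "w \<in> region D t r"
          using QD_imp_region[OF D w] \<open>c \<le> r\<close> by simp
        obtain m where m: "\<forall>i. m $ i \<in> \<int>" "w = m v* M"
          using w unfolding QD_def lattice_def by blast
        have "\<bar>ucomp w\<bar> < 1"
          using w t unfolding QD_def by auto
        then have "norm w \<le> 1 + r"
          using norm_le_ucomp_vcomp[of w] \<open>\<not> c \<le> norm (vcomp w)\<close> \<open>c \<le> r\<close> by linarith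
        have "norm m \<le> C * norm w"
          using elim p m(2) by simp
        also have "\<dots> \<le> C * (1 + r)"
          using \<open>norm w \<le> 1 + r\<close> \<open>0 < C\<close> by simp
        finally have "norm m \<le> C * (1 + r)" .
        then have "m \<in> S"
          unfolding S_def using m(1) by blast
        then show False
          using elim p m(2) \<open>w \<in> region D t r\<close> \<open>\<not> c \<le> norm (vcomp w)\<close> by auto
      qed
    qed
  qed
qed

lemma FD_continuous_within:
  fixes D :: "(real^'d::finite) set"
  assumes D: "D \<subseteq> sphere 0 1" and int: "top_of_set (sphere 0 1) interior_of D \<noteq> {}"
    and "M0 \<in> SLR" "t0 \<in> {0<..<1}" "FD D M0 t0 < \<kappa>"
    and frontier: "(lattice M0 - {0}) \<inter> frontier (region D t0 \<kappa>) = {}"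
  shows "continuous (at (M0, t0) within SLR \<times> {0<..<1}) (\<lambda>(M, t). FD D M t)"
  unfolding continuous_within case_prod_conv
proof (rule order_tendstoI)
  have M0: "invertible M0"
    using \<open>M0 \<in> SLR\<close> by (rule SLR_invertible)
  fix a
  assume "a < FD D M0 t0"
  then obtain c where "a < c" "c < FD D M0 t0"
    using dense by blast
  have "\<forall>\<^sub>F (M, t) in nhds (M0, t0). t \<in> {0<..<1} \<longrightarrow> (\<forall>w\<in>QD D M t. c \<le> norm (vcomp w))"
    using \<open>c < FD D M0 t0\<close> assms(5) by (intro eventually_QD_norm_ge[OF D frontier M0]) auto
  then show "\<forall>\<^sub>F p in at (M0, t0) within SLR \<times> {0<..<1}. a < (\<lambda>(M, t). FD D M t) p"
    unfolding eventually_at_filter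
  proof eventually_elim
    case (elim p)
    obtain M t where p: "p = (M, t)"
      by fastforce
    have "c \<le> FD D M t" if "M \<in> SLR" "t \<in> {0<..<1}"
      using elim that QD_nonempty[OF int SLR_invertible[OF that(1)]] unfolding p FD_def
      by (auto intro!: cInf_greatest)
    then show ?case
      using \<open>a < c\<close> unfolding p by auto
  qed
next
  have M0: "invertible M0"
    using \<open>M0 \<in> SLR\<close> by (rule SLR_invertible)
  fix a
  assume "FD D M0 t0 < a"
  then have "\<forall>\<^sub>F (M, t) in nhds (M0, t0). FD D M t < min a \<kappa>"
    using QD_nonempty[OF int M0] assms(4,5)
    by (intro eventually_FD_less[OF D frontier]) auto
  then show "\<forall>\<^sub>F p in at (M0, t0) within SLR \<times> {0<..<1}. (\<lambda>(M, t). FD D M t) p < a"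
    unfolding eventually_at_filter by eventually_elim auto
qed

lemma FD_bounded_on_compactin:
  fixes D :: "(real^'d::finite) set"
  assumes "top_of_set (sphere 0 1) interior_of D \<noteq> {}"
    and "compactin (prod_topology GammaG_top (top_of_set {0<..<1})) C"
  shows "\<exists>\<kappa>>0. \<forall>M t. M \<in> SLR \<and> (coset M, t) \<in> C \<longrightarrow> FD D M t < \<kappa>"
proof -
  have "\<exists>K. \<forall>p\<in>C. FDq D p < K"
  proof (rule compactin_locally_bounded_above[OF assms(2)])
    fix p assume "p \<in> C"
    then obtain M t where p: "p = (coset M, t)" "M \<in> SLR" "t \<in> {0<..<1}"
      using compactin_subset_topspace[OF assms(2)] by (auto simp: topspace_GammaG_top)
    then obtain K where "\<forall>\<^sub>F (M', t') in nhds (M, t). FD D M' t' < K"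
      using FD_locally_bounded[OF assms(1) SLR_invertible[OF p(2)]] by auto
    then obtain U where U: "openin (prod_topology GammaG_top (top_of_set {0<..<1})) U" "p \<in> U"
      "\<And>q. q \<in> U \<Longrightarrow> \<exists>M' t'. q = (coset M', t') \<and> M' \<in> SLR \<and> t' \<in> {0<..<1} \<and> FD D M' t' < K"
      using GammaG_nbhd_from_nhds p(1-3) by blast
    have "FDq D q < K" if q: "q \<in> U" for q
      using U(3)[OF q] FDq_coset by force
    then show "\<exists>U K. openin (prod_topology GammaG_top (top_of_set {0<..<1})) U \<and> p \<in> U \<and>
                 (\<forall>q\<in>U. FDq D q < K)"
      using U(1,2) by blast
  qed
  then obtain K where "\<forall>p\<in>C. FDq D p < K"
    by blast
  then have "\<forall>M t. M \<in> SLR \<and> (coset M, t) \<in> C \<longrightarrow> FD D M t < max K 1"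
    using FDq_coset by fastforce
  then show ?thesis
    by (intro exI[of _ "max K 1"]) auto
qed

theorem proposition7p1:
  fixes D :: "(real ^ 'd::finite) set"
    and C :: "('d matd1 set \<times> real) set"
  assumes "CARD('d) \<ge> 2"
    and "D \<subseteq> sphere 0 1"
    and "(top_of_set (sphere (0::real^'d) 1)) interior_of D \<noteq> {}"
    and "compactin (prod_topology GammaG_top (top_of_set {0<..<1})) C"
  shows "\<exists>\<kappa>>0.
           (\<forall>M t. M \<in> SLR \<and> (coset M, t) \<in> C \<longrightarrow> FD D M t < \<kappa>) \<and>
           (\<forall>M t. M \<in> SLR \<and> (coset M, t) \<in> C \<and>
                  (lattice M - {0}) \<inter> frontier (region D t \<kappa>) = {} \<longrightarrow>
                  topcontinuous_at (prod_topology GammaG_top (top_of_set {0<..<1}))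
                                   euclideanreal (FDq D) (coset M, t))"
proof -
  obtain \<kappa> where "\<kappa> > 0" and bound: "\<forall>M t. M \<in> SLR \<and> (coset M, t) \<in> C \<longrightarrow> FD D M t < \<kappa>"
    using FD_bounded_on_compactin[OF assms(3,4)] by blast
  have "topcontinuous_at (prod_topology GammaG_top (top_of_set {0<..<1})) euclideanreal
          (FDq D) (coset M, t)"
    if "M \<in> SLR" "(coset M, t) \<in> C" "(lattice M - {0}) \<inter> frontier (region D t \<kappa>) = {}" for M t
  proof -
    have "t \<in> {0<..<1}"
      using that(2) compactin_subset_topspace[OF assms(4)] by auto
    moreover have "FD D M t < \<kappa>"
      using bound that(1,2) by blast
    ultimately show ?thesis
      using that(1,3) assms(2,3) by (intro topcontinuous_at_FDq FD_continuous_within) auto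
  qed
  then show ?thesis
    using \<open>\<kappa> > 0\<close> bound by blast
qed

end
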